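(* Let $\pi\in\mathcal{S}_n$ be a Schröder permutation, and let $\mathcal{E}^*(\pi)$ be the set obtained from $\mathcal{E}(\pi)$ by replacing every element $(i,j)\in\mathcal{E}_1(\pi)$ by $(i-1,j-1)$. Then $\mathcal{E}^*(\pi)$ is a ranked essential set with all ranks equal to $0$: there exists a permutation $\sigma\in\mathcal{S}_n$ with $\mathcal{E}(\sigma)=\mathcal{E}^*(\pi)$ and $\rho_\sigma(i,j)=0$ for every $(i,j)\in\mathcal{E}(\sigma)$; in particular, $\sigma$ avoids $132$.
   Context: A permutation $\pi$ avoids a pattern $\tau\in\mathcal{S}_k$ if no subsequence $\pi_{i_1}\cdots\pi_{i_k}$ ($i_1<\dots<i_k$) is in the same relative order as $\tau$. A Schröder permutation is a permutation avoiding both $1243$ and $2143$. Represent $\pi\in\mathcal{S}_n$ by an $n\times n$ array, rows $i$ numbered top to bottom, columns $j$ left to right, with a dot in square $(i,\pi_i)$. The diagram $D(\pi)$ is the set of squares $(i,j)$ with $\pi_i>j$ and $\pi^{-1}(j)>i$. The essential set $\mathcal{E}(\pi)$ is the set of $(i,j)\in D(\pi)$ with $(i+1,j)\notin D(\pi)$ and $(i,j+1)\notin D(\pi)$ (squares outside the array count as not in $D(\pi)$). The rank (with respect to $\pi$) of a square $(i,j)$ is $\rho_\pi(i,j)=\#\{k<i:\pi_k<j\}$, and $\mathcal{E}_r(\pi)=\{(i,j)\in\mathcal{E}(\pi):\rho_\pi(i,j)=r\}$. *)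

theory Defs
  imports "HOL-Combinatorics.Permutations"
begin

text \<open>Permutations of [n] = {1..n} are functions \<pi> with \<pi> permutes {1..n}.
  A pattern of length k is given as a list of the values \<tau>_1 ... \<tau>_k.\<close>

definition contains_pattern :: "nat \<Rightarrow> (nat \<Rightarrow> nat) \<Rightarrow> nat list \<Rightarrow> bool" where
  "contains_pattern n \<pi> \<tau> \<longleftrightarrow>
     (\<exists>idx :: nat \<Rightarrow> nat.
        strict_mono_on {1..length \<tau>} idx \<and> idx ` {1..length \<tau>} \<subseteq> {1..n} \<and>
        (\<forall>a\<in>{1..length \<tau>}. \<forall>b\<in>{1..length \<tau>}.
            \<pi> (idx a) < \<pi> (idx b) \<longleftrightarrow> \<tau> ! (a - 1) < \<tau> ! (b - 1)))"

definition avoids :: "nat \<Rightarrow> (nat \<Rightarrow> nat) \<Rightarrow> nat list \<Rightarrow> bool" where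
  "avoids n \<pi> \<tau> \<longleftrightarrow> \<not> contains_pattern n \<pi> \<tau>"

definition schroeder :: "nat \<Rightarrow> (nat \<Rightarrow> nat) \<Rightarrow> bool" where
  "schroeder n \<pi> \<longleftrightarrow> \<pi> permutes {1..n} \<and> avoids n \<pi> [1,2,4,3] \<and> avoids n \<pi> [2,1,4,3]"

text \<open>Diagram: squares (i,j) (row i, column j) with \<pi>_i > j and \<pi>^{-1}(j) > i.\<close>
definition diagram :: "nat \<Rightarrow> (nat \<Rightarrow> nat) \<Rightarrow> (nat \<times> nat) set" where
  "diagram n \<pi> = {(i, j). i \<in> {1..n} \<and> j \<in> {1..n} \<and> \<pi> i > j \<and> inv \<pi> j > i}"

definition essential_set :: "nat \<Rightarrow> (nat \<Rightarrow> nat) \<Rightarrow> (nat \<times> nat) set" where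
  "essential_set n \<pi> = {(i, j). (i, j) \<in> diagram n \<pi> \<and>
       (i + 1, j) \<notin> diagram n \<pi> \<and> (i, j + 1) \<notin> diagram n \<pi>}"

definition rank :: "(nat \<Rightarrow> nat) \<Rightarrow> nat \<Rightarrow> nat \<Rightarrow> nat" where
  "rank \<pi> i j = card {k \<in> {1..<i}. \<pi> k < j}"

definition essential_star :: "nat \<Rightarrow> (nat \<Rightarrow> nat) \<Rightarrow> (nat \<times> nat) set" where
  "essential_star n \<pi> =
     (\<lambda>(i, j). if rank \<pi> i j = 1 then (i - 1, j - 1) else (i, j)) ` essential_set n \<pi>"

end

theory Submission
  imports Defs
begin

(* For a Schroeder permutation every square of the diagram has rank at most 1: two dots
   north-west of a square (i, j), together with the dots in row i and in column j, would form
   a 1243 or a 2143. Along the essential set the rank grows strictly in the componentwise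
   order, and i + j <= n + rank on the diagram; after shifting the rank-1 squares this makes
   E*(pi) an antichain of squares with i + j <= n. Such an antichain is the set of corners of
   a Young diagram inside the staircase, and every such Young diagram is the diagram of a
   permutation, built row by row. A permutation whose diagram is a Young diagram in the
   north-west corner has rank 0 on it and avoids 132. *)

lemma contains_pattern_iff_indices:
  "contains_pattern n \<pi> \<tau> \<longleftrightarrow>
     (\<exists>ks. length ks = length \<tau> \<and> sorted_wrt (<) ks \<and> set ks \<subseteq> {1..n} \<and>
        (\<forall>a<length \<tau>. \<forall>b<length \<tau>. \<pi> (ks ! a) < \<pi> (ks ! b) \<longleftrightarrow> \<tau> ! a < \<tau> ! b))"
proof
  assume "contains_pattern n \<pi> \<tau>"
  then obtain idx where mono: "strict_mono_on {1..length \<tau>} idx"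
    and range: "idx ` {1..length \<tau>} \<subseteq> {1..n}"
    and order: "\<forall>a\<in>{1..length \<tau>}. \<forall>b\<in>{1..length \<tau>}.
                  \<pi> (idx a) < \<pi> (idx b) \<longleftrightarrow> \<tau> ! (a - 1) < \<tau> ! (b - 1)"
    unfolding contains_pattern_def by blast
  define ks where "ks = map (\<lambda>a. idx (Suc a)) [0..<length \<tau>]"
  have "sorted_wrt (<) ks"
    using mono by (auto simp: ks_def sorted_wrt_iff_nth_less strict_mono_on_def)
  moreover have "set ks \<subseteq> {1..n}"
    using range by (auto simp: ks_def)
  moreover have "\<forall>a<length \<tau>. \<forall>b<length \<tau>. \<pi> (ks ! a) < \<pi> (ks ! b) \<longleftrightarrow> \<tau> ! a < \<tau> ! b"
    using order by (auto simp: ks_def dest!: bspec[of _ _ "Suc _"])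
  ultimately show "\<exists>ks. length ks = length \<tau> \<and> sorted_wrt (<) ks \<and> set ks \<subseteq> {1..n} \<and>
      (\<forall>a<length \<tau>. \<forall>b<length \<tau>. \<pi> (ks ! a) < \<pi> (ks ! b) \<longleftrightarrow> \<tau> ! a < \<tau> ! b)"
    by (intro exI[of _ ks]) (simp add: ks_def)
next
  assume "\<exists>ks. length ks = length \<tau> \<and> sorted_wrt (<) ks \<and> set ks \<subseteq> {1..n} \<and>
      (\<forall>a<length \<tau>. \<forall>b<length \<tau>. \<pi> (ks ! a) < \<pi> (ks ! b) \<longleftrightarrow> \<tau> ! a < \<tau> ! b)"
  then obtain ks where len: "length ks = length \<tau>" and sorted: "sorted_wrt (<) ks"
    and range: "set ks \<subseteq> {1..n}"
    and order: "\<forall>a<length \<tau>. \<forall>b<length \<tau>. \<pi> (ks ! a) < \<pi> (ks ! b) \<longleftrightarrow> \<tau> ! a < \<tau> ! b"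
    by blast
  define idx where "idx a = ks ! (a - 1)" for a
  have "strict_mono_on {1..length \<tau>} idx"
    using sorted len by (auto simp: strict_mono_on_def idx_def sorted_wrt_iff_nth_less)
  moreover have "idx ` {1..length \<tau>} \<subseteq> {1..n}"
  proof (intro image_subsetI)
    fix a assume "a \<in> {1..length \<tau>}"
    then have "ks ! (a - 1) \<in> set ks" using len by (intro nth_mem) auto
    then show "idx a \<in> {1..n}" using range by (auto simp: idx_def)
  qed
  moreover have "\<forall>a\<in>{1..length \<tau>}. \<forall>b\<in>{1..length \<tau>}.
      \<pi> (idx a) < \<pi> (idx b) \<longleftrightarrow> \<tau> ! (a - 1) < \<tau> ! (b - 1)"
    using order by (auto simp: idx_def)
  ultimately show "contains_pattern n \<pi> \<tau>"
    unfolding contains_pattern_def by blast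
qed

lemma diagram_iff:
  assumes "\<sigma> permutes {1..n}"
  shows "(i, j) \<in> diagram n \<sigma> \<longleftrightarrow> i \<in> {1..n} \<and> j \<in> \<sigma> ` {i<..n} \<inter> {..<\<sigma> i}"
proof
  assume "(i, j) \<in> diagram n \<sigma>"
  then have "i \<in> {1..n}" "j \<in> {1..n}" "j < \<sigma> i" "i < inv \<sigma> j"
    by (auto simp: diagram_def)
  moreover from this have "inv \<sigma> j \<in> {1..n}" "\<sigma> (inv \<sigma> j) = j"
    using assms permutes_in_image[OF permutes_inv[OF assms]] by (auto simp: permutes_inverses(1))
  ultimately show "i \<in> {1..n} \<and> j \<in> \<sigma> ` {i<..n} \<inter> {..<\<sigma> i}"
    by (metis IntI atLeastAtMost_iff greaterThanAtMost_iff image_eqI lessThan_iff)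
next
  assume "i \<in> {1..n} \<and> j \<in> \<sigma> ` {i<..n} \<inter> {..<\<sigma> i}"
  then obtain r where "i \<in> {1..n}" "r \<in> {i<..n}" "j = \<sigma> r" "j < \<sigma> i"
    by blast
  moreover from this have "\<sigma> r \<in> {1..n}" "inv \<sigma> (\<sigma> r) = r"
    using assms permutes_in_image[OF assms, of r] by (auto simp: permutes_inverses(2))
  ultimately show "(i, j) \<in> diagram n \<sigma>"
    by (auto simp: diagram_def)
qed

definition skip :: "nat \<Rightarrow> nat \<Rightarrow> nat" where
  "skip v x = (if x < v then x else Suc x)"

lemma strict_mono_skip: "strict_mono (skip v)"
  by (rule strict_monoI) (simp add: skip_def)

lemma skip_image_atLeastAtMost:
  assumes "v \<in> {1..Suc m}"
  shows "skip v ` {1..m} = {1..Suc m} - {v}"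
proof
  show "{1..Suc m} - {v} \<subseteq> skip v ` {1..m}"
  proof
    fix y assume "y \<in> {1..Suc m} - {v}"
    then have "y = skip v (if y < v then y else y - 1)" "(if y < v then y else y - 1) \<in> {1..m}"
      using assms by (auto simp: skip_def)
    then show "y \<in> skip v ` {1..m}"
      by blast
  qed
qed (use assms in \<open>auto simp: skip_def\<close>)

definition prepend :: "nat \<Rightarrow> (nat \<Rightarrow> nat) \<Rightarrow> nat \<Rightarrow> nat" where
  "prepend v \<tau> i = (if i = 0 then 0 else if i = 1 then v else skip v (\<tau> (i - 1)))"

lemma prepend_Suc: "x \<noteq> 0 \<Longrightarrow> prepend v \<tau> (Suc x) = skip v (\<tau> x)"
  by (simp add: prepend_def)

lemma prepend_image_Suc: "0 \<notin> A \<Longrightarrow> prepend v \<tau> ` Suc ` A = skip v ` \<tau> ` A"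
  unfolding image_image prepend_def by (rule image_cong) auto

lemma prepend_permutes:
  assumes \<tau>: "\<tau> permutes {1..m}" and v: "v \<in> {1..Suc m}"
  shows "prepend v \<tau> permutes {1..Suc m}"
proof (rule bij_imp_permutes)
  have "{1..Suc m} = insert 1 (Suc ` {1..m})"
    by (auto simp: image_iff intro: bexI[of _ "_ - 1"])
  then have "prepend v \<tau> ` {1..Suc m} = insert (prepend v \<tau> 1) (prepend v \<tau> ` Suc ` {1..m})"
    by (simp only: image_insert)
  also have "\<dots> = insert v (skip v ` \<tau> ` {1..m})"
    using prepend_image_Suc[of "{1..m}" v \<tau>] by (simp add: prepend_def)
  also have "\<dots> = {1..Suc m}"
    using v skip_image_atLeastAtMost[OF v] permutes_image[OF \<tau>] by auto
  finally show "bij_betw (prepend v \<tau>) {1..Suc m} {1..Suc m}"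
    by (simp add: bij_betw_def eq_card_imp_inj_on)
next
  fix i assume "i \<notin> {1..Suc m}"
  moreover have "\<tau> (i - 1) = i - 1" if "Suc m < i"
    using that by (intro permutes_not_in[OF \<tau>]) auto
  ultimately show "prepend v \<tau> i = i"
    using v by (auto simp: prepend_def skip_def)
qed

lemma permutation_with_row_lengths:
  fixes l :: "nat \<Rightarrow> nat"
  assumes "\<And>i k. 1 \<le> i \<Longrightarrow> i \<le> k \<Longrightarrow> l k \<le> l i"
    and "\<And>i. i \<in> {1..n} \<Longrightarrow> l i + i \<le> n"
  shows "\<exists>\<sigma>. \<sigma> permutes {1..n} \<and> (\<forall>i\<in>{1..n}. \<sigma> ` {i<..n} \<inter> {..<\<sigma> i} = {1..l i})"
  using assms
proof (induction n arbitrary: l)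
  case 0
  show ?case by (auto intro: permutes_id)
next
  case (Suc m)
  have "\<exists>\<tau>. \<tau> permutes {1..m} \<and> (\<forall>i\<in>{1..m}. \<tau> ` {i<..m} \<inter> {..<\<tau> i} = {1..l (Suc i)})"
  proof (rule Suc.IH)
    show "l (Suc k) \<le> l (Suc i)" if "1 \<le> i" "i \<le> k" for i k
      using Suc.prems(1) that by simp
    show "l (Suc i) + i \<le> m" if "i \<in> {1..m}" for i
      using Suc.prems(2)[of "Suc i"] that by simp
  qed
  then obtain \<tau> where \<tau>: "\<tau> permutes {1..m}"
    and rows: "\<forall>i\<in>{1..m}. \<tau> ` {i<..m} \<inter> {..<\<tau> i} = {1..l (Suc i)}"
    by blast
  define v where "v = Suc (l 1)"
  have v: "v \<in> {1..Suc m}" "\<And>i. 1 \<le> i \<Longrightarrow> l i < v"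
    using Suc.prems by (force simp: v_def)+
  have tail: "prepend v \<tau> ` {Suc i<..Suc m} = skip v ` \<tau> ` {i<..m}" for i
  proof -
    have "{Suc i<..Suc m} = Suc ` {i<..m}"
      by (simp flip: atLeastSucAtMost_greaterThanAtMost)
    then show ?thesis
      by (simp add: prepend_image_Suc)
  qed
  have "prepend v \<tau> ` {i<..Suc m} \<inter> {..<prepend v \<tau> i} = {1..l i}"
    if i: "i \<in> {1..Suc m}" for i
  proof (cases "i = 1")
    case True
    then have "prepend v \<tau> ` {i<..Suc m} \<inter> {..<prepend v \<tau> i} = ({1..Suc m} - {v}) \<inter> {..<v}"
      using tail[of 0] permutes_image[OF \<tau>] skip_image_atLeastAtMost[OF v(1)]
      by (simp add: prepend_def flip: atLeastSucAtMost_greaterThanAtMost)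
    also have "\<dots> = {1..l i}"
      using True v by (auto simp: v_def)
    finally show ?thesis .
  next
    case False
    with i obtain i' where i': "i = Suc i'" "i' \<in> {1..m}"
      by (cases i) auto
    then have "prepend v \<tau> ` {i<..Suc m} \<inter> {..<prepend v \<tau> i} =
        skip v ` (\<tau> ` {i'<..m} \<inter> {..<\<tau> i'})"
      using tail[of i'] strict_mono_skip[of v]
      by (auto simp: prepend_Suc strict_mono_less)
    also have "\<dots> = skip v ` {1..l i}"
      using rows i' by simp
    also have "\<dots> = {1..l i}"
      using v(2)[of i] i by (auto simp: skip_def image_iff)
    finally show ?thesis .
  qed
  with prepend_permutes[OF \<tau> v(1)] show ?case
    by blast
qed

definition down_closure :: "(nat \<times> nat) set \<Rightarrow> (nat \<times> nat) set" where
  "down_closure C = {(i, j). 1 \<le> i \<and> 1 \<le> j \<and> (\<exists>(a, b)\<in>C. i \<le> a \<and> j \<le> b)}"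

lemma down_closure_downward:
  "(i, j) \<in> down_closure C \<Longrightarrow> 1 \<le> i' \<Longrightarrow> i' \<le> i \<Longrightarrow> 1 \<le> j' \<Longrightarrow> j' \<le> j \<Longrightarrow>
    (i', j') \<in> down_closure C"
  unfolding down_closure_def by (auto intro: order_trans)

lemma exists_permutation_diagram_eq_down_closure:
  assumes C: "\<And>a b. (a, b) \<in> C \<Longrightarrow> 1 \<le> a \<and> 1 \<le> b \<and> a + b \<le> n"
  shows "\<exists>\<sigma>. \<sigma> permutes {1..n} \<and> diagram n \<sigma> = down_closure C"
proof -
  define l where "l i = Max (insert 0 {b. \<exists>a. (a, b) \<in> C \<and> i \<le> a})" for i
  have "finite C"
    using C by (intro finite_subset[of C "{..n} \<times> {..n}"]) fastforce+
  then have "finite {b. \<exists>a. (a, b) \<in> C \<and> i \<le> a}" for i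
    by (rule finite_subset[rotated, OF finite_imageI[of _ snd]]) force
  then have l_ge_iff: "j \<le> l i \<longleftrightarrow> (\<exists>(a, b)\<in>C. i \<le> a \<and> j \<le> b)" if "1 \<le> j" for i j
    using that by (auto simp: l_def Max_ge_iff)
  have "l k \<le> l i" if "i \<le> k" for i k
    using l_ge_iff[of "l k" k] l_ge_iff[of "l k" i] that by fastforce
  moreover have "l i + i \<le> n" if "i \<in> {1..n}" for i
  proof (cases "l i = 0")
    case False
    then show ?thesis
      using l_ge_iff[of "l i" i] C by fastforce
  qed (use that in simp)
  ultimately obtain \<sigma> where \<sigma>: "\<sigma> permutes {1..n}"
    and rows: "\<forall>i\<in>{1..n}. \<sigma> ` {i<..n} \<inter> {..<\<sigma> i} = {1..l i}"
    using permutation_with_row_lengths[of l n] by blast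
  have "(i, j) \<in> diagram n \<sigma> \<longleftrightarrow> (i, j) \<in> down_closure C" for i j
  proof -
    have "(i, j) \<in> diagram n \<sigma> \<longleftrightarrow> i \<in> {1..n} \<and> j \<in> {1..l i}"
      using rows diagram_iff[OF \<sigma>, of i j] by blast
    also have "\<dots> \<longleftrightarrow> (i, j) \<in> down_closure C"
      using l_ge_iff[of j i] C by (fastforce simp: down_closure_def)
    finally show ?thesis .
  qed
  with \<sigma> show ?thesis
    by auto
qed

lemma essential_set_eq_antichain:
  assumes D: "diagram n \<sigma> = down_closure C"
    and pos: "\<And>a b. (a, b) \<in> C \<Longrightarrow> 1 \<le> a \<and> 1 \<le> b"
    and antichain: "\<And>a b a' b'. (a, b) \<in> C \<Longrightarrow> (a', b') \<in> C \<Longrightarrow> a \<le> a' \<Longrightarrow> b \<le> b' \<Longrightarrow>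
      (a, b) = (a', b')"
  shows "essential_set n \<sigma> = C"
proof (intro set_eqI iffI)
  fix x assume "x \<in> essential_set n \<sigma>"
  then obtain i j where x: "x = (i, j)" and "(i, j) \<in> down_closure C"
    and "(Suc i, j) \<notin> down_closure C" "(i, Suc j) \<notin> down_closure C"
    by (auto simp: essential_set_def D)
  then show "x \<in> C"
    unfolding down_closure_def by (force simp: not_less_eq_eq[symmetric])
next
  fix x assume "x \<in> C"
  with pos antichain show "x \<in> essential_set n \<sigma>"
    unfolding essential_set_def D down_closure_def by fastforce
qed

lemma rank_eq_0_if_diagram_eq_down_closure:
  assumes \<sigma>: "\<sigma> permutes {1..n}" and D: "diagram n \<sigma> = down_closure C"
    and ij: "(i, j) \<in> diagram n \<sigma>"
  shows "rank \<sigma> i j = 0"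
proof -
  have "\<not> \<sigma> k < j" if k: "k \<in> {1..<i}" for k
  proof
    assume "\<sigma> k < j"
    moreover have "\<sigma> k \<in> {1..n}" "i \<le> n"
      using ij k permutes_in_image[OF \<sigma>, of k] by (auto simp: diagram_def)
    ultimately have "(k, \<sigma> k) \<in> diagram n \<sigma>"
      using ij k D down_closure_downward[of i j C k "\<sigma> k"] by auto
    then show False
      by (simp add: diagram_def)
  qed
  then show ?thesis
    by (simp add: rank_def)
qed

lemma avoids_132_if_diagram_eq_down_closure:
  assumes \<sigma>: "\<sigma> permutes {1..n}" and D: "diagram n \<sigma> = down_closure C"
  shows "avoids n \<sigma> [1, 3, 2]"
proof -
  have no_132: False
    if k: "k1 < k2" "k2 < k3" "k1 \<in> {1..n}" "k2 \<in> {1..n}" "k3 \<in> {1..n}"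
      and v: "\<sigma> k1 < \<sigma> k3" "\<sigma> k3 < \<sigma> k2" for k1 k2 k3
  proof -
    have "(k2, \<sigma> k3) \<in> diagram n \<sigma>"
      using k v by (auto simp: diagram_iff[OF \<sigma>])
    moreover have "\<sigma> k1 \<in> {1..n}"
      using k permutes_in_image[OF \<sigma>] by blast
    ultimately have "(k1, \<sigma> k1) \<in> diagram n \<sigma>"
      using k v D down_closure_downward[of k2 "\<sigma> k3" C k1 "\<sigma> k1"] by auto
    then show False
      by (simp add: diagram_def)
  qed
  show ?thesis
    unfolding avoids_def contains_pattern_iff_indices
  proof (intro notI, elim exE conjE)
    fix ks :: "nat list"
    assume len: "length ks = length [1, 3, 2::nat]" and "sorted_wrt (<) ks"
      and "set ks \<subseteq> {1..n}"
      and order: "\<forall>a<length [1, 3, 2::nat]. \<forall>b<length [1, 3, 2::nat].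
        \<sigma> (ks ! a) < \<sigma> (ks ! b) \<longleftrightarrow> [1, 3, 2::nat] ! a < [1, 3, 2] ! b"
    moreover obtain k1 k2 k3 where "ks = [k1, k2, k3]"
      using len by (auto simp: length_Suc_conv numeral_3_eq_3)
    moreover note order[rule_format, of 0 2] order[rule_format, of 2 1]
    ultimately show False
      using no_132[of k1 k2 k3] by simp
  qed
qed

lemma rank_le_1_if_schroeder:
  assumes s: "schroeder n \<pi>" and ij: "(i, j) \<in> diagram n \<pi>"
  shows "rank \<pi> i j \<le> 1"
proof (rule ccontr)
  assume "\<not> rank \<pi> i j \<le> 1"
  then have "\<not> (\<forall>k\<in>{k \<in> {1..<i}. \<pi> k < j}. \<forall>k'\<in>{k \<in> {1..<i}. \<pi> k < j}. k = k')"
    by (simp add: rank_def card_le_Suc0_iff_eq)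
  then obtain k1 k2 where k: "k1 < k2" "k1 \<in> {1..<i}" "k2 \<in> {1..<i}" "\<pi> k1 < j" "\<pi> k2 < j"
    by (auto elim: linorder_neqE_nat)
  have \<pi>: "\<pi> permutes {1..n}"
    using s by (simp add: schroeder_def)
  have "\<pi> k1 \<noteq> \<pi> k2"
    using k(1) permutes_inj[OF \<pi>] by (auto dest: injD)
  define d where "d = inv \<pi> j"
  have ij': "i \<in> {1..n}" "j < \<pi> i" "i < d" "d \<in> {1..n}" "\<pi> d = j"
    using ij permutes_in_image[OF permutes_inv[OF \<pi>]]
    by (auto simp: diagram_def d_def permutes_inverses(1)[OF \<pi>])
  define \<tau> :: "nat list" where "\<tau> = (if \<pi> k1 < \<pi> k2 then [1, 2, 4, 3] else [2, 1, 4, 3])"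
  have "contains_pattern n \<pi> \<tau>"
    unfolding contains_pattern_iff_indices
  proof (intro exI conjI)
    show "length [k1, k2, i, d] = length \<tau>" "sorted_wrt (<) [k1, k2, i, d]"
      "set [k1, k2, i, d] \<subseteq> {1..n}"
      using k ij' by (auto simp: \<tau>_def)
    show "\<forall>a<length \<tau>. \<forall>b<length \<tau>.
        \<pi> ([k1, k2, i, d] ! a) < \<pi> ([k1, k2, i, d] ! b) \<longleftrightarrow> \<tau> ! a < \<tau> ! b"
      using k ij' \<open>\<pi> k1 \<noteq> \<pi> k2\<close> by (auto simp: \<tau>_def All_less_Suc numeral_eq_Suc)
  qed
  with s show False
    by (auto simp: schroeder_def avoids_def \<tau>_def split: if_splits)
qed

lemma diagram_add_le_rank:
  assumes \<pi>: "\<pi> permutes {1..n}" and ij: "(i, j) \<in> diagram n \<pi>"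
  shows "i + j \<le> n + rank \<pi> i j"
proof -
  have ij': "i \<in> {1..n}" "j \<in> {1..n}" "j < \<pi> i" "i < inv \<pi> j"
    using ij by (auto simp: diagram_def)
  have "inv \<pi> ` {1..j} \<subseteq> {k \<in> {1..<i}. \<pi> k < j} \<union> {i<..n}"
  proof
    fix k assume "k \<in> inv \<pi> ` {1..j}"
    then obtain v where v: "v \<in> {1..j}" "k = inv \<pi> v"
      by blast
    then have \<pi>_k: "\<pi> k = v"
      using permutes_inverses(1)[OF \<pi>] by simp
    have "k \<in> {1..n}"
      using v ij'(2) permutes_in_image[OF permutes_inv[OF \<pi>], of v] by auto
    moreover have "k \<noteq> i"
      using \<pi>_k v ij' by auto
    moreover have "k < i \<Longrightarrow> v \<noteq> j"
      using v ij' by auto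
    ultimately show "k \<in> {k \<in> {1..<i}. \<pi> k < j} \<union> {i<..n}"
      using v \<pi>_k by auto
  qed
  then have "card (inv \<pi> ` {1..j}) \<le> card ({k \<in> {1..<i}. \<pi> k < j} \<union> {i<..n})"
    by (intro card_mono) simp_all
  also have "\<dots> \<le> rank \<pi> i j + card {i<..n}"
    unfolding rank_def by (rule card_Un_le)
  finally have "card (inv \<pi> ` {1..j}) \<le> rank \<pi> i j + (n - i)"
    by simp
  moreover have "card (inv \<pi> ` {1..j}) = j"
    using permutes_inj[OF permutes_inv[OF \<pi>]] by (simp add: card_image inj_on_subset)
  ultimately show ?thesis
    using ij' by auto
qed

lemma two_le_if_rank_pos:
  assumes \<pi>: "\<pi> permutes {1..n}" and "rank \<pi> i j \<noteq> 0"
  shows "2 \<le> i" "2 \<le> j"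
proof -
  obtain k where k: "k \<in> {1..<i}" "\<pi> k < j"
    using assms(2) by (auto simp: rank_def card_eq_0_iff)
  have "1 \<le> \<pi> k"
    using k permutes_in_image[OF \<pi>, of k] permutes_not_in[OF \<pi>, of k] by fastforce
  with k show "2 \<le> i" "2 \<le> j"
    by auto
qed

lemma essential_setD:
  assumes \<pi>: "\<pi> permutes {1..n}" and ij: "(i, j) \<in> essential_set n \<pi>"
  shows "1 \<le> i" "1 \<le> j" "j < \<pi> i" "i < inv \<pi> j" "\<pi> (Suc i) \<le> j" "inv \<pi> (Suc j) \<le> i"
proof -
  have D: "i \<in> {1..n}" "j \<in> {1..n}" "j < \<pi> i" "i < inv \<pi> j"
    and below: "(Suc i, j) \<notin> diagram n \<pi>" and right: "(i, Suc j) \<notin> diagram n \<pi>"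
    using ij by (auto simp: essential_set_def diagram_def)
  then show "1 \<le> i" "1 \<le> j" "j < \<pi> i" "i < inv \<pi> j"
    by auto
  have "inv \<pi> j \<in> {1..n}" "\<pi> i \<in> {1..n}"
    using D permutes_in_image[OF permutes_inv[OF \<pi>]] permutes_in_image[OF \<pi>] by auto
  show "\<pi> (Suc i) \<le> j"
  proof (rule ccontr)
    assume "\<not> \<pi> (Suc i) \<le> j"
    then have "inv \<pi> j \<noteq> Suc i"
      using permutes_inv_eq[OF \<pi>, of j "Suc i"] by auto
    with \<open>\<not> \<pi> (Suc i) \<le> j\<close> have "(Suc i, j) \<in> diagram n \<pi>"
      using D \<open>inv \<pi> j \<in> {1..n}\<close> by (auto simp: diagram_def)
    with below show False ..
  qed
  show "inv \<pi> (Suc j) \<le> i"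
  proof (rule ccontr)
    assume "\<not> inv \<pi> (Suc j) \<le> i"
    then have "\<pi> i \<noteq> Suc j"
      using permutes_inv_eq[OF \<pi>, of "Suc j" i] by auto
    with \<open>\<not> inv \<pi> (Suc j) \<le> i\<close> have "(i, Suc j) \<in> diagram n \<pi>"
      using D \<open>\<pi> i \<in> {1..n}\<close> by (auto simp: diagram_def)
    with right show False ..
  qed
qed

lemma essential_rank_increase:
  assumes \<pi>: "\<pi> permutes {1..n}"
    and ij: "(i, j) \<in> essential_set n \<pi>" and ij': "(i', j') \<in> essential_set n \<pi>"
    and le: "i \<le> i'" "j \<le> j'"
  shows "rank \<pi> i j + of_bool (i < i') + of_bool (j < j') \<le> rank \<pi> i' j'"
proof -
  note e = essential_setD[OF \<pi> ij] and e' = essential_setD[OF \<pi> ij']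
  define A where "A = {k \<in> {1..<i}. \<pi> k < j}"
  define A' where "A' = {k \<in> {1..<i'}. \<pi> k < j'}"
  define k0 where "k0 = inv \<pi> (Suc j)"
  have k0: "\<pi> k0 = Suc j" "k0 \<le> i"
    using e(6) permutes_inverses(1)[OF \<pi>] by (simp_all add: k0_def)
  have "1 \<le> k0"
    using k0(1) permutes_not_in[OF \<pi>, of 0] by (cases k0) auto
  have row: "Suc i \<in> A'" if "i < i'"
  proof -
    have "\<pi> (Suc i) \<noteq> j'"
      using e'(4) that permutes_inv_eq[OF \<pi>, of j' "Suc i"] by auto
    moreover have "Suc i \<noteq> i'"
      using e(5) e'(3) le by auto
    ultimately show ?thesis
      using that e(5) le by (auto simp: A'_def)
  qed
  have col: "k0 \<in> A'" if "j < j'"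
  proof -
    have "Suc j \<noteq> j'"
      using e'(4) k0 le by (auto simp: k0_def)
    moreover have "k0 \<noteq> i'"
      using k0 e'(3) that le by auto
    ultimately show ?thesis
      using that k0 le \<open>1 \<le> k0\<close> by (auto simp: A'_def)
  qed
  (* Row i + 1 and the row holding the value j + 1 are counted at (i', j') but not at (i, j). *)
  define X where "X = (if i < i' then {Suc i} else {}) \<union> (if j < j' then {k0} else {})"
  have "card X = of_bool (i < i') + of_bool (j < j')"
    using k0(2) by (simp add: X_def)
  moreover have "A \<inter> X = {}"
    using k0 by (auto simp: A_def X_def)
  moreover have "A \<union> X \<subseteq> A'"
    using le row col by (auto simp: A_def A'_def X_def)
  then have "card (A \<union> X) \<le> card A'"
    by (intro card_mono) (simp_all add: A'_def)
  ultimately show ?thesis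
    by (simp add: rank_def A_def A'_def X_def card_Un_disjoint)
qed

lemma essential_rank_le_if_le_Suc:
  assumes \<pi>: "\<pi> permutes {1..n}"
    and ij: "(i, j) \<in> essential_set n \<pi>" and ij': "(i', j') \<in> essential_set n \<pi>"
    and le: "i \<le> Suc i'" "j \<le> Suc j'"
  shows "rank \<pi> i j \<le> rank \<pi> i' j'"
proof -
  note e = essential_setD[OF \<pi> ij] and e' = essential_setD[OF \<pi> ij']
  consider "i \<le> i'" "j \<le> j'" | "i = Suc i'" | "j = Suc j'" "i \<le> i'"
    using le e(3) e'(5) by fastforce
  then show ?thesis
  proof cases
    case 1
    then show ?thesis
      using essential_rank_increase[OF \<pi> ij ij'] by simp
  next
    case 2
    then have "j < j'"
      using e(3) e'(5) by simp
    then have "{k \<in> {1..<i}. \<pi> k < j} \<subseteq> {k \<in> {1..<i'}. \<pi> k < j'}"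
      using 2 e'(3) by (auto simp: less_Suc_eq)
    then show ?thesis
      unfolding rank_def by (intro card_mono) simp_all
  next
    case 3
    have "\<pi> k \<noteq> j'" if "k < i" for k
      using that 3 e'(4) permutes_inv_eq[OF \<pi>, of j' k] by auto
    then have "{k \<in> {1..<i}. \<pi> k < j} \<subseteq> {k \<in> {1..<i'}. \<pi> k < j'}"
      using 3 by (auto simp: less_Suc_eq)
    then show ?thesis
      unfolding rank_def by (intro card_mono) simp_all
  qed
qed

lemma essential_starE:
  assumes s: "schroeder n \<pi>" and x: "x \<in> essential_star n \<pi>"
  obtains i j where "(i, j) \<in> essential_set n \<pi>" "x = (i - rank \<pi> i j, j - rank \<pi> i j)"
    "rank \<pi> i j \<le> 1" "rank \<pi> i j < i" "rank \<pi> i j < j"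
proof -
  have \<pi>: "\<pi> permutes {1..n}"
    using s by (simp add: schroeder_def)
  obtain i j where ij: "(i, j) \<in> essential_set n \<pi>"
    and x_eq: "x = (if rank \<pi> i j = 1 then (i - 1, j - 1) else (i, j))"
    using x by (auto simp: essential_star_def)
  have le_1: "rank \<pi> i j \<le> 1"
    using rank_le_1_if_schroeder[OF s] ij by (simp add: essential_set_def)
  show thesis
  proof (cases "rank \<pi> i j = 1")
    case True
    then show thesis
      using that[OF ij] x_eq two_le_if_rank_pos[OF \<pi>, of i j] by simp
  next
    case False
    with le_1 have "rank \<pi> i j = 0"
      by simp
    then show thesis
      using that[OF ij] x_eq essential_setD(1,2)[OF \<pi> ij] by simp
  qed
qed

lemma essential_star_bounds:
  assumes s: "schroeder n \<pi>" and ab: "(a, b) \<in> essential_star n \<pi>"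
  shows "1 \<le> a \<and> 1 \<le> b \<and> a + b \<le> n"
proof -
  have \<pi>: "\<pi> permutes {1..n}"
    using s by (simp add: schroeder_def)
  obtain i j where ij: "(i, j) \<in> essential_set n \<pi>"
    and "(a, b) = (i - rank \<pi> i j, j - rank \<pi> i j)" "rank \<pi> i j \<le> 1" "rank \<pi> i j < i" "rank \<pi> i j < j"
    using essential_starE[OF s ab] by blast
  moreover have "i + j \<le> n + rank \<pi> i j"
    using diagram_add_le_rank[OF \<pi>] ij by (simp add: essential_set_def)
  ultimately show ?thesis
    by auto
qed

lemma essential_star_antichain:
  assumes s: "schroeder n \<pi>"
    and ab: "(a, b) \<in> essential_star n \<pi>" and ab': "(a', b') \<in> essential_star n \<pi>"
    and le: "a \<le> a'" "b \<le> b'"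
  shows "(a, b) = (a', b')"
proof -
  have \<pi>: "\<pi> permutes {1..n}"
    using s by (simp add: schroeder_def)
  obtain i j where ij: "(i, j) \<in> essential_set n \<pi>"
    and x: "(a, b) = (i - rank \<pi> i j, j - rank \<pi> i j)"
    "rank \<pi> i j \<le> 1" "rank \<pi> i j < i" "rank \<pi> i j < j"
    using essential_starE[OF s ab] by blast
  obtain i' j' where ij': "(i', j') \<in> essential_set n \<pi>"
    and y: "(a', b') = (i' - rank \<pi> i' j', j' - rank \<pi> i' j')"
    "rank \<pi> i' j' \<le> 1" "rank \<pi> i' j' < i'" "rank \<pi> i' j' < j'"
    using essential_starE[OF s ab'] by blast
  show ?thesis
  proof (cases "rank \<pi> i j \<le> rank \<pi> i' j'")
    case True
    with x y le have ij_le: "i \<le> i'" "j \<le> j'"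
      by auto
    with essential_rank_increase[OF \<pi> ij ij'] have
      "rank \<pi> i j + of_bool (i < i') + of_bool (j < j') \<le> rank \<pi> i' j'" .
    with ij_le x y le show ?thesis
      by (cases "i < i'"; cases "j < j'") auto
  next
    case False
    with x y le have "i \<le> Suc i'" "j \<le> Suc j'"
      by auto
    with essential_rank_le_if_le_Suc[OF \<pi> ij ij'] False show ?thesis
      by simp
  qed
qed

theorem proposition2p6:
  fixes n :: nat and \<pi> :: "nat \<Rightarrow> nat"
  assumes "schroeder n \<pi>"
  shows "\<exists>\<sigma>. \<sigma> permutes {1..n} \<and> essential_set n \<sigma> = essential_star n \<pi> \<and>
           (\<forall>(i, j) \<in> essential_set n \<sigma>. rank \<sigma> i j = 0) \<and> avoids n \<sigma> [1,3,2]"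
proof -
  note bounds = essential_star_bounds[OF assms]
  obtain \<sigma> where \<sigma>: "\<sigma> permutes {1..n}" and D: "diagram n \<sigma> = down_closure (essential_star n \<pi>)"
    using exists_permutation_diagram_eq_down_closure[of "essential_star n \<pi>" n] bounds by blast
  have "essential_set n \<sigma> = essential_star n \<pi>"
    using essential_set_eq_antichain[OF D] bounds essential_star_antichain[OF assms] by blast
  moreover have "\<forall>(i, j) \<in> essential_set n \<sigma>. rank \<sigma> i j = 0"
    using rank_eq_0_if_diagram_eq_down_closure[OF \<sigma> D] by (auto simp: essential_set_def)
  moreover have "avoids n \<sigma> [1,3,2]"
    using avoids_132_if_diagram_eq_down_closure[OF \<sigma> D] .
  ultimately show ?thesis
    using \<sigma> by blast
qed

end
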